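(* Let $N, M \ge 1$ be integers, let the sites be indexed by $j \in \mathbb{Z}_M$ (indices taken cyclically, so site $M+1$ is site $1$), and let $\lambda \ge 0$. Let real numbers $d_{i j l}$, for $i \in \{1,\dots,N\}$ and $j,l \in \mathbb{Z}_M$, satisfy the additive property $d_{ijl} + d_{ilk} = d_{ijk}$ for all $i$ and all $j,l,k \in \mathbb{Z}_M$. Potts model: for a configuration $s = (s_1,\dots,s_M) \in \{1,\dots,N\}^{M}$ define $$H_s(s) = -\sum_{j \in \mathbb{Z}_M} d_{s_j\, j\, (j+1)} + \lambda\, \#\{ j \in \mathbb{Z}_M : s_j \neq s_{j+1}\}.$$ Ising (domain-wall) model: for a configuration $c = (c_1,\dots,c_M) \in \{0,1\}^M$, let $p_1 < p_2 < \dots < p_K$ be the sites with $c_{p}=1$, and define $$H_c(c) = -\sum_{k=1}^{K} J_{p_k\, p_{k+1}} + \lambda \sum_{j} c_j, \qquad p_{K+1} := p_1,$$ where $J_{jl} = \max_{i} d_{ijl}$ (the sum over $k$ is empty, hence $0$, when $K=0$). Then the ground state energies coincide: $\min_{s \in \{1,\dots,N\}^M} H_s(s) = \min_{c \in \{0,1\}^M} H_c(c)$.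
   Context: Interpretation (not needed for the statement): sites $j$ are sampled body shapes traversed cyclically in one gait cycle, the Potts spin value $s_j$ is the contact pattern used on the step from shape $j$ to shape $j+1$, $d_{ijl}$ is the forward displacement obtained by moving from shape $j$ to shape $l$ with contact pattern $i$, and $\lambda$ is a penalty per contact switch. A domain wall $c_{j+1}=1$ corresponds to $s_j \neq s_{j+1}$, and the coupling $J_{jl}$ acts only between cyclically consecutive domain walls. *)

theory Defs
  imports Complex_Main
begin

text \<open>Sites of Z_M are represented by 0..M-1, successor of j is (j+1) mod M.
Spin values are 1..N. Configurations are lists of length M.\<close>

definition potts_configs :: "nat \<Rightarrow> nat \<Rightarrow> nat list set" where
  "potts_configs N M = {s. length s = M \<and> set s \<subseteq> {1..N}}"

definition ising_configs :: "nat \<Rightarrow> bool list set" where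
  "ising_configs M = {c. length c = M}"

definition H_potts :: "nat \<Rightarrow> (nat \<Rightarrow> nat \<Rightarrow> nat \<Rightarrow> real) \<Rightarrow> real \<Rightarrow> nat list \<Rightarrow> real" where
  "H_potts M d lam s =
     - (\<Sum>j<M. d (s ! j) j ((j + 1) mod M))
     + lam * real (card {j. j < M \<and> s ! j \<noteq> s ! ((j + 1) mod M)})"

definition J_coup :: "nat \<Rightarrow> (nat \<Rightarrow> nat \<Rightarrow> nat \<Rightarrow> real) \<Rightarrow> nat \<Rightarrow> nat \<Rightarrow> real" where
  "J_coup N d j l = (MAX i\<in>{1..N}. d i j l)"

definition walls :: "nat \<Rightarrow> bool list \<Rightarrow> nat list" where
  "walls M c = sorted_list_of_set {j. j < M \<and> c ! j}"

definition H_ising :: "nat \<Rightarrow> nat \<Rightarrow> (nat \<Rightarrow> nat \<Rightarrow> nat \<Rightarrow> real) \<Rightarrow> real \<Rightarrow> bool list \<Rightarrow> real" where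
  "H_ising N M d lam c =
     (let p = walls M c; K = length p in
      - (\<Sum>k<K. J_coup N d (p ! k) (p ! ((k + 1) mod K)))
      + lam * real (card {j. j < M \<and> c ! j}))"

end

theory Submission
  imports Defs
begin

text \<open>Additivity makes \<open>d\<close> a coboundary, \<open>d i j l = \<phi> i l - \<phi> i j\<close> with \<open>\<phi> i j = d i 0 j\<close>.
  Summation by parts on the cycle turns the Potts sum \<open>\<Sum>j. d (s j) j (j+1)\<close> into a sum of jumps
  of \<open>\<phi>\<close> at the walls, the sites where the spin changes. As the spin is constant on the domain
  from one wall \<open>p\<^sub>k\<close> to the next, this equals \<open>\<Sum>k. d (s p\<^sub>k) p\<^sub>k p\<^sub>k\<^sub>+\<^sub>1\<close>. Each term is at most
  \<open>J p\<^sub>k p\<^sub>k\<^sub>+\<^sub>1\<close>, with equality when the domain carries a maximising spin, and the number of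
  walls bounds the number of disagreements. So every Potts configuration is beaten by its wall
  configuration, and every wall configuration by its maximising filling of the domains.\<close>

lemma sum_cyclic_shift:
  fixes g :: "nat \<Rightarrow> 'a::comm_monoid_add"
  shows "(\<Sum>j<M. g ((j + 1) mod M)) = (\<Sum>j<M. g j)"
proof (cases M)
  case (Suc n)
  have "(\<Sum>j<M. g ((j + 1) mod M)) = (\<Sum>j<n. g ((j + 1) mod M)) + g 0"
    by (simp add: Suc)
  also have "\<dots> = (\<Sum>j<n. g (Suc j)) + g 0"
    by (simp add: Suc)
  also have "\<dots> = (\<Sum>j<M. g j)"
    by (simp only: Suc sum.lessThan_Suc_shift add.commute)
  finally show ?thesis .
qed simp

lemma cyclic_pred_succ:
  fixes j M :: nat
  shows "j < M \<Longrightarrow> ((j + 1) mod M + M - 1) mod M = j"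
  by (cases "j + 1 = M") auto

lemma cyclic_pred_pos:
  fixes j M :: nat
  assumes "0 < j" "j < M"
  shows "(j + M - 1) mod M = j - 1"
proof -
  have "j + M - 1 = (j - 1) + M"
    using assms(1) by simp
  then have "(j + M - 1) mod M = (j - 1) mod M"
    by (simp only: mod_add_self2)
  then show ?thesis
    using assms(2) by simp
qed

lemma sum_cyclic_by_parts:
  fixes f :: "nat \<Rightarrow> nat \<Rightarrow> 'a::ab_group_add"
  shows "(\<Sum>j<M. f j ((j + 1) mod M) - f j j) = (\<Sum>j<M. f ((j + M - 1) mod M) j - f j j)"
proof -
  have "(\<Sum>j<M. f j ((j + 1) mod M)) = (\<Sum>j<M. f (((j + 1) mod M + M - 1) mod M) ((j + 1) mod M))"
    by (intro sum.cong refl) (auto simp only: lessThan_iff cyclic_pred_succ)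
  also have "\<dots> = (\<Sum>j<M. f ((j + M - 1) mod M) j)"
    by (rule sum_cyclic_shift)
  finally show ?thesis
    by (simp add: sum_subtractf)
qed

lemma card_cyclic_disagreements:
  fixes s :: "nat \<Rightarrow> 'a" and M :: nat
  shows "card {j. j < M \<and> s j \<noteq> s ((j + 1) mod M)}
       = card {j. j < M \<and> s ((j + M - 1) mod M) \<noteq> s j}"
proof -
  have card_as_sum: "card {j. j < M \<and> P j} = (\<Sum>j<M. if P j then 1 else 0)" for P
  proof -
    have "(\<Sum>j<M. if P j then 1 else 0) = card ({..<M} \<inter> {j. P j})"
      by (simp add: sum.If_cases)
    also have "{..<M} \<inter> {j. P j} = {j. j < M \<and> P j}"
      by auto
    finally show ?thesis ..
  qed
  have "(\<Sum>j<M. if s j \<noteq> s ((j + 1) mod M) then 1 else 0)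
      = (\<Sum>j<M. if s (((j + 1) mod M + M - 1) mod M) \<noteq> s ((j + 1) mod M) then 1 else 0 :: nat)"
    by (intro sum.cong refl) (auto simp only: lessThan_iff cyclic_pred_succ)
  also have "\<dots> = (\<Sum>j<M. if s ((j + M - 1) mod M) \<noteq> s j then 1 else 0)"
    by (rule sum_cyclic_shift)
  finally show ?thesis
    by (simp only: card_as_sum)
qed

lemma cyclic_induct:
  fixes j m M :: nat
  assumes "j < M" and base: "m < M" "P m"
    and step: "\<And>j. j < M \<Longrightarrow> P ((j + M - 1) mod M) \<Longrightarrow> P j"
  shows "P j"
proof -
  have "P ((m + t) mod M)" for t
  proof (induction t)
    case (Suc t)
    let ?x = "(m + t) mod M"
    have "(m + Suc t) mod M = (?x + 1) mod M"
      by (simp add: mod_simps)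
    moreover have "((?x + 1) mod M + M - 1) mod M = ?x"
      using base(1) by (intro cyclic_pred_succ) simp
    ultimately show ?case
      using Suc.IH base(1) step[of "(?x + 1) mod M"] by simp
  qed (use base in simp)
  moreover have "(m + (j + M - m)) mod M = j"
    using assms(1) base(1) by simp
  ultimately show ?thesis
    by metis
qed

lemma mod_double_pred: "(K + K - 1) mod K = (K - 1) mod (K::nat)"
proof (cases K)
  case (Suc n)
  then have "K + K - 1 = n + K" by simp
  then have "(K + K - 1) mod K = n mod K"
    by (simp only: mod_add_self2)
  then show ?thesis
    using Suc by simp
qed simp

text \<open>The position in \<open>sorted_list_of_set W\<close> of the last wall at or before site \<open>j\<close>, i.e. of the
  wall opening the domain of \<open>j\<close>; sites before the first wall belong to the domain of the last
  wall, cyclically.\<close>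
definition last_wall_index :: "nat set \<Rightarrow> nat \<Rightarrow> nat" where
  "last_wall_index W j = (card {w\<in>W. w \<le> j} + card W - 1) mod card W"

lemma nth_sorted_list_of_set_in:
  "finite W \<Longrightarrow> k < card W \<Longrightarrow> sorted_list_of_set W ! k \<in> W"
  by (metis length_sorted_list_of_set nth_mem set_sorted_list_of_set)

lemma nth_sorted_list_of_set_le_iff:
  assumes "finite W" "i < card W" "k < card W"
  shows "sorted_list_of_set W ! i \<le> sorted_list_of_set W ! k \<longleftrightarrow> i \<le> k"
  using assms sorted_wrt_nth_less[OF strict_sorted_list_of_set, of i k W]
    sorted_wrt_nth_less[OF strict_sorted_list_of_set, of k i W]
  by (metis length_sorted_list_of_set linorder_not_le nat_less_le order_less_imp_le)

lemma card_le_nth_sorted_list_of_set: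
  assumes "finite W" "k < card W"
  shows "card {w\<in>W. w \<le> sorted_list_of_set W ! k} = Suc k"
proof -
  let ?p = "sorted_list_of_set W"
  have "{w\<in>W. w \<le> ?p ! k} = (!) ?p ` {..k}"
  proof (intro equalityI subsetI)
    fix w assume "w \<in> {w\<in>W. w \<le> ?p ! k}"
    then have "w \<in> set ?p" "w \<le> ?p ! k"
      using assms(1) by auto
    then obtain i where "i < card W" "w = ?p ! i" "?p ! i \<le> ?p ! k"
      by (auto simp: in_set_conv_nth)
    then show "w \<in> (!) ?p ` {..k}"
      using nth_sorted_list_of_set_le_iff assms by auto
  next
    fix w assume "w \<in> (!) ?p ` {..k}"
    then obtain i where "i \<le> k" "w = ?p ! i" by auto
    then show "w \<in> {w\<in>W. w \<le> ?p ! k}"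
      using nth_sorted_list_of_set_le_iff[of W i k] assms nth_mem[of i ?p] by auto
  qed
  moreover have "inj_on ((!) ?p) {..k}"
    using assms by (auto simp: inj_on_def nth_eq_iff_index_eq)
  ultimately show ?thesis
    by (simp add: card_image)
qed

lemma last_wall_index_nth:
  assumes "finite W" "k < card W"
  shows "last_wall_index W (sorted_list_of_set W ! k) = k"
  using assms by (simp add: last_wall_index_def card_le_nth_sorted_list_of_set)

lemma last_wall_index_pred_nonwall:
  assumes "W \<subseteq> {..<M}" "j < M" "j \<notin> W"
  shows "last_wall_index W ((j + M - 1) mod M) = last_wall_index W j"
proof (cases "j = 0")
  case True
  then have "{w\<in>W. w \<le> (j + M - 1) mod M} = W" "{w\<in>W. w \<le> j} = {}"
    using assms by (auto simp: less_Suc_eq_le)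
  then show ?thesis
    unfolding last_wall_index_def by (simp only: card.empty add_0 mod_double_pred)
next
  case False
  then have "(j + M - 1) mod M = j - 1"
    using assms(2) by (intro cyclic_pred_pos) simp_all
  then have "{w\<in>W. w \<le> (j + M - 1) mod M} = {w\<in>W. w \<le> j}"
    using False assms(3) by (auto simp: le_diff_conv2 le_less)
  then show ?thesis
    by (simp add: last_wall_index_def)
qed

lemma last_wall_index_pred_wall:
  assumes W: "W \<subseteq> {..<M}" and k: "k < card W"
  shows "last_wall_index W ((sorted_list_of_set W ! k + M - 1) mod M) = (k + card W - 1) mod card W"
proof -
  let ?p = "sorted_list_of_set W"
  have fin: "finite W"
    using W finite_subset by blast
  have "?p ! k \<in> W"
    using fin k by (rule nth_sorted_list_of_set_in)
  then have pM: "?p ! k < M"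
    using W by auto
  have card_upto: "card {w\<in>W. w \<le> ?p ! k} = Suc k"
    using card_le_nth_sorted_list_of_set[OF fin k] .
  show ?thesis
  proof (cases "?p ! k = 0")
    case True
    then have "k = 0"
      using nth_sorted_list_of_set_le_iff[OF fin k, of 0] k by simp
    moreover have "{w\<in>W. w \<le> (?p ! k + M - 1) mod M} = W"
      using True W by (auto simp: less_Suc_eq_le)
    ultimately show ?thesis
      unfolding last_wall_index_def using k by (simp only: mod_double_pred) simp
  next
    case False
    then have "(?p ! k + M - 1) mod M = ?p ! k - 1"
      using pM by (intro cyclic_pred_pos) simp_all
    then have "{w\<in>W. w \<le> (?p ! k + M - 1) mod M} = {w\<in>W. w \<le> ?p ! k} - {?p ! k}"
      using False by auto
    then have "card {w\<in>W. w \<le> (?p ! k + M - 1) mod M} = k"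
      using card_upto \<open>?p ! k \<in> W\<close> fin by simp
    then show ?thesis
      by (simp add: last_wall_index_def)
  qed
qed

lemma eq_at_last_wall:
  assumes W: "W \<subseteq> {..<M}" "W \<noteq> {}"
    and const: "\<And>j. j < M \<Longrightarrow> j \<notin> W \<Longrightarrow> s ((j + M - 1) mod M) = s j"
    and j: "j < M"
  shows "s j = s (sorted_list_of_set W ! last_wall_index W j)"
proof -
  let ?p = "sorted_list_of_set W"
  have fin: "finite W"
    using W(1) finite_subset by blast
  have at_wall: "s w = s (?p ! last_wall_index W w)" if "w \<in> W" for w
  proof -
    have "w \<in> set ?p"
      using that fin by simp
    then obtain k where "k < length ?p" "w = ?p ! k"
      by (metis in_set_conv_nth)
    moreover have "length ?p = card W"
      by simp
    ultimately show ?thesis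
      using last_wall_index_nth[OF fin] by simp
  qed
  obtain m where "m \<in> W"
    using W(2) by blast
  show ?thesis
  proof (rule cyclic_induct[where P = "\<lambda>j. s j = s (?p ! last_wall_index W j)", OF j])
    show "m < M"
      using \<open>m \<in> W\<close> W(1) by auto
    show "s m = s (?p ! last_wall_index W m)"
      using \<open>m \<in> W\<close> by (rule at_wall)
  next
    fix j
    assume "j < M" and pred: "s ((j + M - 1) mod M) = s (?p ! last_wall_index W ((j + M - 1) mod M))"
    show "s j = s (?p ! last_wall_index W j)"
    proof (cases "j \<in> W")
      case False
      then have "s j = s ((j + M - 1) mod M)"
        using const[OF \<open>j < M\<close>] by simp
      also have "\<dots> = s (?p ! last_wall_index W ((j + M - 1) mod M))"
        by (rule pred)
      also have "last_wall_index W ((j + M - 1) mod M) = last_wall_index W j"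
        using last_wall_index_pred_nonwall[OF W(1) \<open>j < M\<close> False] .
      finally show ?thesis .
    qed (rule at_wall)
  qed
qed

text \<open>Summation by parts leaves only the jumps of \<open>\<phi>\<close> at the walls; the jump at \<open>p\<^sub>k\<close> involves the spin
  of the previous domain, which is \<open>s p\<^sub>k\<^sub>-\<^sub>1\<close>, and a second summation by parts over the walls
  gives the right-hand side.\<close>
lemma sum_coboundary_along_walls:
  fixes \<phi> :: "nat \<Rightarrow> nat \<Rightarrow> 'a::ab_group_add" and s :: "nat \<Rightarrow> nat"
  assumes W: "W \<subseteq> {..<M}"
    and const: "\<And>j. j < M \<Longrightarrow> j \<notin> W \<Longrightarrow> s ((j + M - 1) mod M) = s j"
  defines "p \<equiv> sorted_list_of_set W" and "K \<equiv> card W"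
  shows "(\<Sum>j<M. \<phi> (s j) ((j + 1) mod M) - \<phi> (s j) j)
       = (\<Sum>k<K. \<phi> (s (p ! k)) (p ! ((k + 1) mod K)) - \<phi> (s (p ! k)) (p ! k))"
proof -
  have fin: "finite W"
    using W finite_subset by blast
  have "(\<Sum>j<M. \<phi> (s j) ((j + 1) mod M) - \<phi> (s j) j)
      = (\<Sum>j<M. \<phi> (s ((j + M - 1) mod M)) j - \<phi> (s j) j)"
    by (rule sum_cyclic_by_parts)
  also have "\<dots> = (\<Sum>j\<in>W. \<phi> (s ((j + M - 1) mod M)) j - \<phi> (s j) j)"
    by (rule sum.mono_neutral_right) (use W const in auto)
  also have "\<dots> = (\<Sum>k<K. \<phi> (s ((p ! k + M - 1) mod M)) (p ! k) - \<phi> (s (p ! k)) (p ! k))"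
  proof -
    have "bij_betw ((!) p) {..<K} W"
      using fin by (intro bij_betw_nth) (simp_all add: p_def K_def)
    then show ?thesis
      by (rule sum.reindex_bij_betw[symmetric])
  qed
  also have "\<dots> = (\<Sum>k<K. \<phi> (s (p ! ((k + K - 1) mod K))) (p ! k) - \<phi> (s (p ! k)) (p ! k))"
  proof (intro sum.cong refl)
    fix k assume "k \<in> {..<K}"
    then have k: "k < card W" and "W \<noteq> {}"
      by (auto simp: K_def)
    have "p ! k \<in> W"
      using k fin by (simp add: p_def nth_sorted_list_of_set_in)
    then have "(p ! k + M - 1) mod M < M"
      using W by auto
    then have "s ((p ! k + M - 1) mod M) = s (p ! last_wall_index W ((p ! k + M - 1) mod M))"
      unfolding p_def
      using eq_at_last_wall[where s = s, OF W \<open>W \<noteq> {}\<close> const]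
      by blast
    also have "\<dots> = s (p ! ((k + K - 1) mod K))"
      using last_wall_index_pred_wall[OF W k] by (simp add: p_def K_def)
    finally show "\<phi> (s ((p ! k + M - 1) mod M)) (p ! k) - \<phi> (s (p ! k)) (p ! k)
        = \<phi> (s (p ! ((k + K - 1) mod K))) (p ! k) - \<phi> (s (p ! k)) (p ! k)"
      by simp
  qed
  also have "\<dots> = (\<Sum>k<K. \<phi> (s (p ! k)) (p ! ((k + 1) mod K)) - \<phi> (s (p ! k)) (p ! k))"
    by (rule sum_cyclic_by_parts[of "\<lambda>k x. \<phi> (s (p ! k)) (p ! x)", symmetric])
  finally show ?thesis .
qed

lemma displacement_coboundary:
  fixes d :: "nat \<Rightarrow> nat \<Rightarrow> nat \<Rightarrow> real"
  assumes additive: "\<And>i j l k. i \<in> {1..N} \<Longrightarrow> j < M \<Longrightarrow> l < M \<Longrightarrow> k < M \<Longrightarrow>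
                       d i j l + d i l k = d i j k"
    and "i \<in> {1..N}" "j < M" "l < M"
  shows "d i j l = d i 0 l - d i 0 j"
  using additive[of i 0 j l] assms(2-4) by simp

lemma sum_displacement_along_walls:
  fixes d :: "nat \<Rightarrow> nat \<Rightarrow> nat \<Rightarrow> real" and s :: "nat \<Rightarrow> nat"
  assumes additive: "\<And>i j l k. i \<in> {1..N} \<Longrightarrow> j < M \<Longrightarrow> l < M \<Longrightarrow> k < M \<Longrightarrow>
                       d i j l + d i l k = d i j k"
    and W: "W \<subseteq> {..<M}"
    and const: "\<And>j. j < M \<Longrightarrow> j \<notin> W \<Longrightarrow> s ((j + M - 1) mod M) = s j"
    and spins: "\<And>j. j < M \<Longrightarrow> s j \<in> {1..N}"
  defines "p \<equiv> sorted_list_of_set W" and "K \<equiv> card W"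
  shows "(\<Sum>j<M. d (s j) j ((j + 1) mod M)) = (\<Sum>k<K. d (s (p ! k)) (p ! k) (p ! ((k + 1) mod K)))"
proof -
  have fin: "finite W"
    using W finite_subset by blast
  have wall_site: "p ! k < M" if "k < K" for k
  proof -
    have "p ! k \<in> W"
      using that fin by (simp add: p_def K_def nth_sorted_list_of_set_in)
    then show ?thesis
      using W by auto
  qed
  have "(\<Sum>j<M. d (s j) j ((j + 1) mod M)) = (\<Sum>j<M. d (s j) 0 ((j + 1) mod M) - d (s j) 0 j)"
    by (intro sum.cong refl displacement_coboundary[OF additive]) (use spins in auto)
  also have "\<dots> = (\<Sum>k<K. d (s (p ! k)) 0 (p ! ((k + 1) mod K)) - d (s (p ! k)) 0 (p ! k))"
    unfolding p_def K_def by (rule sum_coboundary_along_walls[where s = s, OF W const])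
  also have "\<dots> = (\<Sum>k<K. d (s (p ! k)) (p ! k) (p ! ((k + 1) mod K)))"
    by (intro sum.cong refl displacement_coboundary[OF additive, symmetric])
      (use spins wall_site in auto)
  finally show ?thesis .
qed

lemma le_J_coup: "i \<in> {1..N} \<Longrightarrow> d i j l \<le> J_coup N d j l"
  unfolding J_coup_def by (intro Max_ge) auto

lemma J_coup_attained: "N \<ge> 1 \<Longrightarrow> \<exists>i\<in>{1..N}. d i j l = J_coup N d j l"
proof -
  assume "N \<ge> 1"
  then have "J_coup N d j l \<in> (\<lambda>i. d i j l) ` {1..N}"
    unfolding J_coup_def by (intro Max_in) auto
  then show ?thesis
    by auto
qed

lemma H_ising_walls:
  assumes "W = {j. j < M \<and> c ! j}"
  shows "H_ising N M d lam c =
    - (\<Sum>k<card W. J_coup N d (sorted_list_of_set W ! k) (sorted_list_of_set W ! ((k + 1) mod card W)))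
    + lam * real (card W)"
  using assms by (simp add: H_ising_def walls_def Let_def)

lemma ising_le_potts:
  fixes d :: "nat \<Rightarrow> nat \<Rightarrow> nat \<Rightarrow> real"
  assumes additive: "\<And>i j l k. i \<in> {1..N} \<Longrightarrow> j < M \<Longrightarrow> l < M \<Longrightarrow> k < M \<Longrightarrow>
                       d i j l + d i l k = d i j k"
    and s: "s \<in> potts_configs N M"
  shows "\<exists>c\<in>ising_configs M. H_ising N M d lam c \<le> H_potts M d lam s"
proof -
  define W where "W = {j. j < M \<and> s ! ((j + M - 1) mod M) \<noteq> s ! j}"
  define p where "p = sorted_list_of_set W"
  define c where "c = map (\<lambda>j. j \<in> W) [0..<M]"
  have W_c: "W = {j. j < M \<and> c ! j}"
    by (auto simp: c_def W_def)
  have spins: "s ! j \<in> {1..N}" if "j < M" for j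
    using s that nth_mem by (fastforce simp: potts_configs_def)
  have "W \<subseteq> {..<M}"
    by (auto simp: W_def)
  then have "finite W"
    by (rule finite_subset) simp
  have wall_spins: "s ! (p ! k) \<in> {1..N}" if "k < card W" for k
  proof -
    have "p ! k \<in> W"
      using that \<open>finite W\<close> by (simp add: p_def nth_sorted_list_of_set_in)
    then show ?thesis
      using spins by (simp add: W_def)
  qed
  have "(\<Sum>j<M. d (s ! j) j ((j + 1) mod M))
      = (\<Sum>k<card W. d (s ! (p ! k)) (p ! k) (p ! ((k + 1) mod card W)))"
    unfolding p_def
    by (rule sum_displacement_along_walls[where s = "\<lambda>j. s ! j", OF additive \<open>W \<subseteq> {..<M}\<close>])
      (use spins in \<open>auto simp: W_def\<close>)
  also have "\<dots> \<le> (\<Sum>k<card W. J_coup N d (p ! k) (p ! ((k + 1) mod card W)))"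
    by (intro sum_mono le_J_coup wall_spins) simp
  finally have "(\<Sum>j<M. d (s ! j) j ((j + 1) mod M))
      \<le> (\<Sum>k<card W. J_coup N d (p ! k) (p ! ((k + 1) mod card W)))" .
  moreover have "card {j. j < M \<and> s ! j \<noteq> s ! ((j + 1) mod M)} = card W"
    unfolding W_def by (rule card_cyclic_disagreements)
  ultimately have "H_ising N M d lam c \<le> H_potts M d lam s"
    unfolding H_potts_def H_ising_walls[OF W_c] p_def by simp
  moreover have "c \<in> ising_configs M"
    by (simp add: c_def ising_configs_def)
  ultimately show ?thesis
    by blast
qed

lemma potts_le_ising:
  fixes d :: "nat \<Rightarrow> nat \<Rightarrow> nat \<Rightarrow> real" and lam :: real
  assumes "N \<ge> 1" and "lam \<ge> 0"
    and additive: "\<And>i j l k. i \<in> {1..N} \<Longrightarrow> j < M \<Longrightarrow> l < M \<Longrightarrow> k < M \<Longrightarrow>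
                       d i j l + d i l k = d i j k"
  shows "\<exists>s\<in>potts_configs N M. H_potts M d lam s \<le> H_ising N M d lam c"
proof -
  define W where "W = {j. j < M \<and> c ! j}"
  define p where "p = sorted_list_of_set W"
  define K where "K = card W"
  have W: "W \<subseteq> {..<M}" "finite W"
    by (auto simp: W_def intro: finite_subset)
  have "\<forall>k. \<exists>a. a \<in> {1..N} \<and> d a (p ! k) (p ! ((k + 1) mod K)) = J_coup N d (p ! k) (p ! ((k + 1) mod K))"
    using J_coup_attained[OF \<open>N \<ge> 1\<close>] by blast
  then obtain i where i_spin: "\<And>k. i k \<in> {1..N}"
    and i_max: "\<And>k. d (i k) (p ! k) (p ! ((k + 1) mod K)) = J_coup N d (p ! k) (p ! ((k + 1) mod K))"
    by metis
  define s where "s = map (\<lambda>j. i (last_wall_index W j)) [0..<M]"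
  have s_nth: "s ! j = i (last_wall_index W j)" if "j < M" for j
    using that by (simp add: s_def)
  have const: "s ! ((j + M - 1) mod M) = s ! j" if "j < M" "j \<notin> W" for j
    using that s_nth last_wall_index_pred_nonwall[OF W(1) that] by simp
  have "(\<Sum>j<M. d (s ! j) j ((j + 1) mod M)) = (\<Sum>k<K. d (s ! (p ! k)) (p ! k) (p ! ((k + 1) mod K)))"
    unfolding p_def K_def
    by (rule sum_displacement_along_walls[where s = "\<lambda>j. s ! j", OF additive W(1) const])
      (use i_spin in \<open>auto simp: s_nth\<close>)
  also have "\<dots> = (\<Sum>k<K. J_coup N d (p ! k) (p ! ((k + 1) mod K)))"
  proof (intro sum.cong refl)
    fix k assume "k \<in> {..<K}"
    then have "p ! k \<in> W"
      using W(2) by (simp add: p_def K_def nth_sorted_list_of_set_in)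
    then show "d (s ! (p ! k)) (p ! k) (p ! ((k + 1) mod K)) = J_coup N d (p ! k) (p ! ((k + 1) mod K))"
      using \<open>k \<in> {..<K}\<close> W s_nth i_max last_wall_index_nth[OF W(2)] by (auto simp: p_def K_def)
  qed
  finally have energy:
    "(\<Sum>j<M. d (s ! j) j ((j + 1) mod M)) = (\<Sum>k<K. J_coup N d (p ! k) (p ! ((k + 1) mod K)))" .
  have "card {j. j < M \<and> s ! j \<noteq> s ! ((j + 1) mod M)}
      = card {j. j < M \<and> s ! ((j + M - 1) mod M) \<noteq> s ! j}"
    by (rule card_cyclic_disagreements)
  also have "\<dots> \<le> K"
    unfolding K_def using const W(2) by (intro card_mono) (auto simp: W_def)
  finally have "H_potts M d lam s \<le> H_ising N M d lam c"
    unfolding H_potts_def H_ising_walls[OF W_def] energy p_def[symmetric] K_def[symmetric]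
    using \<open>lam \<ge> 0\<close> by (simp add: mult_left_mono)
  moreover have "s \<in> potts_configs N M"
    using i_spin by (auto simp: s_def potts_configs_def)
  ultimately show ?thesis
    by blast
qed

lemma Min_image_le_Min_image:
  fixes f :: "'a \<Rightarrow> 'c::linorder" and g :: "'b \<Rightarrow> 'c"
  assumes "finite A" "finite B" "B \<noteq> {}"
    and dominated: "\<And>b. b \<in> B \<Longrightarrow> \<exists>a\<in>A. f a \<le> g b"
  shows "Min (f ` A) \<le> Min (g ` B)"
proof -
  have "Min (f ` A) \<le> g b" if b: "b \<in> B" for b
  proof -
    obtain a where "a \<in> A" "f a \<le> g b"
      using dominated[OF b] by blast
    moreover have "Min (f ` A) \<le> f a"
      using \<open>a \<in> A\<close> \<open>finite A\<close> by simp
    ultimately show ?thesis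
      by order
  qed
  then show ?thesis
    using assms(2,3) by (simp add: Min_ge_iff)
qed

theorem theorem1:
  fixes N M :: nat and d :: "nat \<Rightarrow> nat \<Rightarrow> nat \<Rightarrow> real" and lam :: real
  assumes "N \<ge> 1" and "M \<ge> 1" and "lam \<ge> 0"
    and additive: "\<And>i j l k. i \<in> {1..N} \<Longrightarrow> j < M \<Longrightarrow> l < M \<Longrightarrow> k < M \<Longrightarrow>
                     d i j l + d i l k = d i j k"
  shows "Min (H_potts M d lam ` potts_configs N M) = Min (H_ising N M d lam ` ising_configs M)"
proof -
  have "finite (potts_configs N M)"
    using finite_lists_length_eq[of "{1..N}" M] by (simp add: potts_configs_def conj_commute)
  moreover have "finite (ising_configs M)"
    using finite_lists_length_eq[of "UNIV :: bool set" M] by (simp add: ising_configs_def)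
  moreover have "replicate M 1 \<in> potts_configs N M"
    using \<open>N \<ge> 1\<close> by (auto simp: potts_configs_def)
  moreover have "replicate M False \<in> ising_configs M"
    by (simp add: ising_configs_def)
  ultimately show ?thesis
    using ising_le_potts[OF additive] potts_le_ising[OF assms(1,3) additive]
    by (intro antisym Min_image_le_Min_image) auto
qed

end
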